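(* Let $s\ge1$ and let $\mathcal{G}_{2s}\subset GL_{2s}(\mathbb{Z})$ be the group generated by the linear maps $\sigma_1,\dotsc,\sigma_{2s}$ of $\mathbb{Z}^{2s}$ given in coordinates $k=(k_1,\dotsc,k_{2s})$ by \[ \sigma_1:\ k_1\mapsto k_1,\quad k_j\mapsto k_j+k_1\ (j>1); \] \[ \sigma_i\ (2\le i\le 2s):\ k_{i-1}\mapsto 2k_{i-1}-k_i,\quad k_i\mapsto k_{i-1},\quad k_j\mapsto k_j\ (j\ne i-1,i). \] For a nonzero $k\in\mathbb{Z}^{2s}$ put $\gamma=\gcd(k_1,\dotsc,k_{2s})$, $\alpha=\#\{i:\ k_i/\gamma\equiv1\pmod 2\}$ and $\delta=|2\alpha-2s-1|$. Then $\delta$ (and $\gamma$) are invariant under the action of $\mathcal{G}_{2s}$: for every $g\in\mathcal{G}_{2s}$ and every nonzero $k$, the vectors $k$ and $gk$ have the same value of $\delta$. *)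

theory Defs
  imports Main
begin

text \<open>Vectors of Z^n are represented as functions nat => int, coordinates 1..n,
  vanishing outside {1..n}.\<close>

definition zvec :: "nat \<Rightarrow> (nat \<Rightarrow> int) set" where
  "zvec n = {k. \<forall>j. j \<notin> {1..n} \<longrightarrow> k j = 0}"

definition sigma :: "nat \<Rightarrow> nat \<Rightarrow> (nat \<Rightarrow> int) \<Rightarrow> (nat \<Rightarrow> int)" where
  "sigma n i k =
     (if i = 1 then (\<lambda>j. if 2 \<le> j \<and> j \<le> n then k j + k 1 else k j)
      else (\<lambda>j. if j = i - 1 then 2 * k (i - 1) - k i
                else if j = i then k (i - 1) else k j))"

inductive_set Ggroup :: "nat \<Rightarrow> ((nat \<Rightarrow> int) \<Rightarrow> (nat \<Rightarrow> int)) set" for n where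
  gen: "1 \<le> i \<Longrightarrow> i \<le> n \<Longrightarrow> sigma n i \<in> Ggroup n"
| ident: "id \<in> Ggroup n"
| comp: "g \<in> Ggroup n \<Longrightarrow> h \<in> Ggroup n \<Longrightarrow> g \<circ> h \<in> Ggroup n"
| inverse: "g \<in> Ggroup n \<Longrightarrow> inv_into (zvec n) g \<in> Ggroup n"

definition gam :: "nat \<Rightarrow> (nat \<Rightarrow> int) \<Rightarrow> int" where
  "gam n k = Gcd (k ` {1..n})"

definition alph :: "nat \<Rightarrow> (nat \<Rightarrow> int) \<Rightarrow> nat" where
  "alph n k = card {i \<in> {1..n}. k i div gam n k mod 2 = 1}"

definition delt :: "nat \<Rightarrow> (nat \<Rightarrow> int) \<Rightarrow> int" where
  "delt n k = \<bar>2 * int (alph n k) - int n - 1\<bar>"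

end

theory Submission
  imports Defs "HOL-Combinatorics.Transposition"
begin

text \<open>Each \<sigma>_i and its inverse have integer entries, so they preserve the common divisors
  of the coordinates and hence \<gamma>. As \<sigma>_i is linear, it maps the primitive vector k/\<gamma> to
  (\<sigma>_i k)/\<gamma>, so \<alpha> only depends on the parities of k/\<gamma>. Modulo 2, \<sigma>_i (i \<ge> 2) transposes
  the coordinates i-1 and i, while \<sigma>_1 either changes nothing (k_1/\<gamma> even) or flips the
  parity of every coordinate but the first, replacing \<alpha> by 2s + 1 - \<alpha>. Both leave
  |2\<alpha> - 2s - 1| unchanged.\<close>

definition sigma_inv :: "nat \<Rightarrow> nat \<Rightarrow> (nat \<Rightarrow> int) \<Rightarrow> (nat \<Rightarrow> int)" where
  "sigma_inv n i k =
     (if i = 1 then (\<lambda>j. if 2 \<le> j \<and> j \<le> n then k j - k 1 else k j)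
      else (\<lambda>j. if j = i - 1 then k i
                else if j = i then 2 * k i - k (i - 1) else k j))"

lemma sigma_inv_sigma [simp]: "sigma_inv n i (sigma n i k) = k"
  by (auto simp: sigma_def sigma_inv_def fun_eq_iff)

lemma sigma_sigma_inv [simp]: "sigma n i (sigma_inv n i k) = k"
  by (auto simp: sigma_def sigma_inv_def fun_eq_iff)

lemma sigma_zvec: "i \<le> n \<Longrightarrow> k \<in> zvec n \<Longrightarrow> sigma n i k \<in> zvec n"
  by (auto simp: sigma_def zvec_def)

lemma sigma_inv_zvec: "i \<le> n \<Longrightarrow> k \<in> zvec n \<Longrightarrow> sigma_inv n i k \<in> zvec n"
  by (auto simp: sigma_inv_def zvec_def)

lemma bij_betw_sigma: "i \<le> n \<Longrightarrow> bij_betw (sigma n i) (zvec n) (zvec n)"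
  by (rule bij_betw_byWitness[where f' = "sigma_inv n i"]) (auto simp: sigma_zvec sigma_inv_zvec)

lemma dvd_gam_iff: "d dvd gam n k \<longleftrightarrow> (\<forall>j\<in>{1..n}. d dvd k j)"
  by (simp add: gam_def dvd_Gcd_iff)

lemma dvd_sigma:
  assumes "1 \<le> i" "i \<le> n" "\<forall>j\<in>{1..n}. d dvd k j" "j \<in> {1..n}"
  shows "d dvd sigma n i k j"
proof (cases "i = 1")
  case True
  have "d dvd k 1" "d dvd k j" using assms by auto
  then show ?thesis using True by (simp add: sigma_def)
next
  case False
  then have "i - 1 \<in> {1..n}" using assms(1,2) by auto
  then have "d dvd k (i - 1)" "d dvd k i" "d dvd k j" using assms by auto
  then show ?thesis using False by (simp add: sigma_def)
qed

lemma dvd_sigma_inv: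
  assumes "1 \<le> i" "i \<le> n" "\<forall>j\<in>{1..n}. d dvd k j" "j \<in> {1..n}"
  shows "d dvd sigma_inv n i k j"
proof (cases "i = 1")
  case True
  have "d dvd k 1" "d dvd k j" using assms by auto
  then show ?thesis using True by (simp add: sigma_inv_def)
next
  case False
  then have "i - 1 \<in> {1..n}" using assms(1,2) by auto
  then have "d dvd k (i - 1)" "d dvd k i" "d dvd k j" using assms by auto
  then show ?thesis using False by (simp add: sigma_inv_def)
qed

lemma gam_sigma:
  assumes "1 \<le> i" "i \<le> n"
  shows "gam n (sigma n i k) = gam n k"
proof -
  have "d dvd gam n (sigma n i k) \<longleftrightarrow> d dvd gam n k" for d
  proof
    assume "d dvd gam n (sigma n i k)"
    then have "\<forall>j\<in>{1..n}. d dvd sigma_inv n i (sigma n i k) j"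
      unfolding dvd_gam_iff by (blast intro: dvd_sigma_inv[OF assms])
    then show "d dvd gam n k" by (simp add: dvd_gam_iff)
  next
    assume "d dvd gam n k"
    then show "d dvd gam n (sigma n i k)"
      unfolding dvd_gam_iff by (blast intro: dvd_sigma[OF assms])
  qed
  moreover have "gam n k' \<ge> 0" for k' by (simp add: gam_def)
  ultimately show ?thesis
    by (meson dvd_refl zdvd_antisym_nonneg)
qed

definition num_odd :: "nat \<Rightarrow> (nat \<Rightarrow> int) \<Rightarrow> nat" where
  "num_odd n q = card {j \<in> {1..n}. odd (q j)}"

lemma num_odd_le: "num_odd n q \<le> n"
proof -
  have "card {j \<in> {1..n}. odd (q j)} \<le> card {1..n}"
    by (rule card_mono) auto
  then show ?thesis by (simp add: num_odd_def)
qed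

lemma alph_eq_num_odd: "alph n k = num_odd n (\<lambda>j. k j div gam n k)"
  by (simp add: alph_def num_odd_def odd_iff_mod_2_eq_one)

lemma gam_dvd: "j \<in> {1..n} \<Longrightarrow> gam n k dvd k j"
  unfolding gam_def by (rule Gcd_dvd) simp

lemma sigma_scale: "sigma n i (\<lambda>j. c * q j) = (\<lambda>j. c * sigma n i q j)"
  by (auto simp: sigma_def fun_eq_iff algebra_simps)

lemma sigma_div_common_divisor:
  assumes "k \<in> zvec n" "\<forall>j\<in>{1..n}. c dvd k j"
  shows "(\<lambda>j. sigma n i k j div c) = sigma n i (\<lambda>j. k j div c)"
proof (cases "c = 0")
  case True
  \<comment> \<open>x div 0 = 0 makes both sides the zero vector.\<close>
  then show ?thesis by (simp add: sigma_def fun_eq_iff)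
next
  case False
  have "k j = c * (k j div c)" for j
    using assms by (cases "j \<in> {1..n}") (auto simp: zvec_def)
  then have "k = (\<lambda>j. c * (k j div c))" ..
  then have "sigma n i k = (\<lambda>j. c * sigma n i (\<lambda>j. k j div c) j)"
    by (metis sigma_scale)
  then show ?thesis using False by simp
qed

lemma num_odd_sigma_swap:
  assumes "2 \<le> i" "i \<le> n"
  shows "num_odd n (sigma n i q) = num_odd n q"
proof -
  let ?t = "transpose (i - 1) i"
  have "odd (sigma n i q j) \<longleftrightarrow> odd (q (?t j))" for j
    using assms by (auto simp: sigma_def transpose_def)
  moreover have "?t j \<in> {1..n} \<longleftrightarrow> j \<in> {1..n}" for j
    using assms by (auto simp: transpose_def)
  ultimately have "{j \<in> {1..n}. odd (sigma n i q j)} = ?t ` {j \<in> {1..n}. odd (q j)}"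
    by (auto simp: in_transpose_image_iff)
  then show ?thesis
    by (simp add: num_odd_def card_image)
qed

lemma num_odd_split_first:
  assumes "1 \<le> n"
  shows "num_odd n q = (if odd (q 1) then 1 else 0) + card {j \<in> {2..n}. odd (q j)}"
proof -
  have "{1..n} = insert 1 {2..n}"
    using assms by auto
  then have "{j \<in> {1..n}. odd (q j)} =
      (if odd (q 1) then insert 1 {j \<in> {2..n}. odd (q j)} else {j \<in> {2..n}. odd (q j)})"
    by auto
  then show ?thesis by (simp add: num_odd_def)
qed

lemma num_odd_sigma1:
  assumes "1 \<le> n"
  shows "num_odd n (sigma n 1 q) = (if odd (q 1) then n + 1 - num_odd n q else num_odd n q)"
proof -
  define S where "S = {j \<in> {2..n}. odd (q j)}"
  have sigma1: "sigma n 1 q 1 = q 1" "\<forall>j\<in>{2..n}. sigma n 1 q j = q j + q 1"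
    by (auto simp: sigma_def)
  show ?thesis
  proof (cases "odd (q 1)")
    case True
    then have "{j \<in> {2..n}. odd (sigma n 1 q j)} = {2..n} - S"
      using sigma1 by (auto simp: S_def)
    moreover have "card ({2..n} - S) = n - 1 - card S"
      by (subst card_Diff_subset) (auto simp: S_def)
    moreover have "card S \<le> card {2..n}"
      by (rule card_mono) (auto simp: S_def)
    ultimately show ?thesis
      using True sigma1 assms num_odd_split_first[OF assms, of q]
        num_odd_split_first[OF assms, of "sigma n 1 q"]
      by (simp add: S_def)
  next
    case False
    then have "{j \<in> {2..n}. odd (sigma n 1 q j)} = S"
      using sigma1 by (auto simp: S_def)
    then show ?thesis
      using False sigma1 num_odd_split_first[OF assms, of q]
        num_odd_split_first[OF assms, of "sigma n 1 q"]
      by (simp add: S_def)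
  qed
qed

lemma delt_sigma:
  assumes "1 \<le> i" "i \<le> n" "k \<in> zvec n"
  shows "delt n (sigma n i k) = delt n k"
proof -
  define q where "q = (\<lambda>j. k j div gam n k)"
  have "alph n (sigma n i k) = num_odd n (sigma n i q)"
    using sigma_div_common_divisor[OF assms(3)] gam_dvd
    by (simp add: alph_eq_num_odd gam_sigma[OF assms(1,2)] q_def)
  moreover have "alph n k = num_odd n q"
    by (simp add: alph_eq_num_odd q_def)
  moreover have "num_odd n (sigma n i q) = num_odd n q
      \<or> num_odd n (sigma n i q) = n + 1 - num_odd n q"
    using num_odd_sigma1[of n q] num_odd_sigma_swap[of i n q] assms(1,2)
    by (cases "i = 1") auto
  ultimately show ?thesis
    using num_odd_le[of n q] by (auto simp: delt_def)
qed

lemma bij_betw_inv_into_invariant: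
  assumes "bij_betw g A A" "\<And>x. x \<in> A \<Longrightarrow> f (g x) = f x" "x \<in> A"
  shows "f (inv_into A g x) = f x"
proof -
  have "inv_into A g x \<in> A" "g (inv_into A g x) = x"
    using assms(1,3) bij_betw_imp_surj_on[OF assms(1)] by (auto intro: inv_into_into f_inv_into_f)
  then show ?thesis using assms(2) by metis
qed

lemma Ggroup_bij: "g \<in> Ggroup n \<Longrightarrow> bij_betw g (zvec n) (zvec n)"
proof (induction rule: Ggroup.induct)
  case ident
  show ?case by (rule bij_betw_id)
next
  case (comp g h)
  then show ?case by (metis bij_betw_trans)
qed (auto intro: bij_betw_sigma bij_betw_inv_into)

lemma Ggroup_invariant:
  assumes "\<And>i k. 1 \<le> i \<Longrightarrow> i \<le> n \<Longrightarrow> k \<in> zvec n \<Longrightarrow> f (sigma n i k) = f k"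
    and "g \<in> Ggroup n" "k \<in> zvec n"
  shows "f (g k) = f k"
  using assms(2,3)
proof (induction arbitrary: k)
  case (gen i)
  then show ?case by (rule assms(1))
next
  case ident
  then show ?case by simp
next
  case (comp g h)
  have "h k \<in> zvec n"
    using Ggroup_bij[OF comp.hyps(2)] comp.prems by (rule bij_betw_apply)
  then show ?case using comp.IH comp.prems by simp
next
  case (inverse g)
  show ?case
    by (rule bij_betw_inv_into_invariant[where f = f, OF Ggroup_bij[OF inverse.hyps] inverse.IH
          inverse.prems])
qed

theorem mainTheorem4:
  fixes s :: nat and g :: "(nat \<Rightarrow> int) \<Rightarrow> (nat \<Rightarrow> int)" and k :: "nat \<Rightarrow> int"
  assumes "s \<ge> 1"
    and "g \<in> Ggroup (2 * s)"
    and "k \<in> zvec (2 * s)"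
    and "\<exists>i\<in>{1..2 * s}. k i \<noteq> 0"
  shows "delt (2 * s) (g k) = delt (2 * s) k \<and> gam (2 * s) (g k) = gam (2 * s) k"
proof -
  have "delt (2 * s) (g k) = delt (2 * s) k"
    by (rule Ggroup_invariant[OF delt_sigma assms(2,3)])
  moreover have "gam (2 * s) (g k) = gam (2 * s) k"
    by (rule Ggroup_invariant[OF gam_sigma assms(2,3)])
  ultimately show ?thesis ..
qed

end
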